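(* Let $D$ be a locally finite connected C-homogeneous digraph and let $x\in VD$. If $N^+(x)$ or $N^-(x)$ consists of precisely one vertex, then $D$ is either an infinite tree or a directed cycle.
   Context: A digraph has an irreflexive, antisymmetric edge relation; connectedness, local finiteness and being a tree refer to the underlying undirected graph. $D$ is C-homogeneous if every isomorphism between finite connected induced subdigraphs extends to an automorphism of $D$. $N^+(x)=\{y: xy\in ED\}$, $N^-(x)=\{y: yx\in ED\}$. *)

theory Defs
  imports Main
begin

definition digraph :: "'a set \<Rightarrow> ('a \<times> 'a) set \<Rightarrow> bool" where
  "digraph V E \<longleftrightarrow> E \<subseteq> V \<times> V \<and> (\<forall>x. (x, x) \<notin> E) \<and> (\<forall>x y. (x, y) \<in> E \<longrightarrow> (y, x) \<notin> E)"

definition out_nbrs :: "('a \<times> 'a) set \<Rightarrow> 'a \<Rightarrow> 'a set" where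
  "out_nbrs E x = {y. (x, y) \<in> E}"

definition in_nbrs :: "('a \<times> 'a) set \<Rightarrow> 'a \<Rightarrow> 'a set" where
  "in_nbrs E x = {y. (y, x) \<in> E}"

definition adj :: "('a \<times> 'a) set \<Rightarrow> 'a \<Rightarrow> 'a \<Rightarrow> bool" where
  "adj E x y \<longleftrightarrow> (x, y) \<in> E \<or> (y, x) \<in> E"

definition connected_on :: "('a \<times> 'a) set \<Rightarrow> 'a set \<Rightarrow> bool" where
  "connected_on E S \<longleftrightarrow>
     (\<forall>x\<in>S. \<forall>y\<in>S. (x, y) \<in> ({(u, v). u \<in> S \<and> v \<in> S \<and> adj E u v})\<^sup>*)"

definition locally_finite :: "'a set \<Rightarrow> ('a \<times> 'a) set \<Rightarrow> bool" where
  "locally_finite V E \<longleftrightarrow> (\<forall>x\<in>V. finite {y. adj E x y})"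

definition induced_iso :: "('a \<times> 'a) set \<Rightarrow> ('a \<Rightarrow> 'a) \<Rightarrow> 'a set \<Rightarrow> 'a set \<Rightarrow> bool" where
  "induced_iso E f A B \<longleftrightarrow> bij_betw f A B \<and>
     (\<forall>x\<in>A. \<forall>y\<in>A. (x, y) \<in> E \<longleftrightarrow> (f x, f y) \<in> E)"

definition automorphism :: "'a set \<Rightarrow> ('a \<times> 'a) set \<Rightarrow> ('a \<Rightarrow> 'a) \<Rightarrow> bool" where
  "automorphism V E g \<longleftrightarrow> induced_iso E g V V"

definition C_homogeneous :: "'a set \<Rightarrow> ('a \<times> 'a) set \<Rightarrow> bool" where
  "C_homogeneous V E \<longleftrightarrow>
     (\<forall>A B f. A \<subseteq> V \<and> B \<subseteq> V \<and> finite A \<and> finite B \<and>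
        connected_on E A \<and> connected_on E B \<and> induced_iso E f A B \<longrightarrow>
        (\<exists>g. automorphism V E g \<and> (\<forall>x\<in>A. g x = f x)))"

definition has_undirected_cycle :: "'a set \<Rightarrow> ('a \<times> 'a) set \<Rightarrow> bool" where
  "has_undirected_cycle V E \<longleftrightarrow>
     (\<exists>n (v :: nat \<Rightarrow> 'a). n \<ge> 3 \<and> inj_on v {..<n} \<and> v ` {..<n} \<subseteq> V \<and>
        (\<forall>i<n. adj E (v i) (v (Suc i mod n))))"

definition is_tree :: "'a set \<Rightarrow> ('a \<times> 'a) set \<Rightarrow> bool" where
  "is_tree V E \<longleftrightarrow> connected_on E V \<and> \<not> has_undirected_cycle V E"

definition is_directed_cycle :: "'a set \<Rightarrow> ('a \<times> 'a) set \<Rightarrow> bool" where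
  "is_directed_cycle V E \<longleftrightarrow>
     (\<exists>n (v :: nat \<Rightarrow> 'a). n \<ge> 3 \<and> inj_on v {..<n} \<and> V = v ` {..<n} \<and>
        E = {(v i, v (Suc i mod n)) | i. i < n})"

end

theory Submission
  imports Defs "HOL-Combinatorics.Orbits"
begin

text \<open>C-homogeneity makes the automorphism group vertex transitive, so if one vertex has a
  unique out-neighbour then all of them have, and the edges are the graph of a map \<open>f\<close> that
  commutes with every automorphism. Hence either every vertex is periodic under \<open>f\<close> or none is.
  If all are, connectedness forces \<open>V\<close> to be a single \<open>f\<close>-orbit, i.e. a directed cycle.
  If none is, \<open>V\<close> is infinite, and an undirected cycle is impossible: a vertex with two
  outgoing cycle edges would have two out-neighbours, so all cycle edges point the same way and
  the finite cycle would be \<open>f\<close>-invariant, hence contain a periodic vertex.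
  The in-degree case is the out-degree case for the converse digraph.\<close>

lemma automorphism_edge_iff:
  assumes "automorphism V E g" "a \<in> V" "b \<in> V"
  shows "(g a, g b) \<in> E \<longleftrightarrow> (a, b) \<in> E"
  using assms by (auto simp: automorphism_def induced_iso_def)

lemma automorphism_out_nbrs:
  assumes dg: "digraph V E" and g: "automorphism V E g" and u: "u \<in> V"
  shows "out_nbrs E (g u) = g ` out_nbrs E u"
proof
  have bij: "bij_betw g V V" using g by (simp add: automorphism_def induced_iso_def)
  show "out_nbrs E (g u) \<subseteq> g ` out_nbrs E u"
  proof
    fix w assume "w \<in> out_nbrs E (g u)"
    then have uw: "(g u, w) \<in> E" and "w \<in> V"
      using dg by (auto simp: out_nbrs_def digraph_def)
    then obtain w' where w': "w' \<in> V" "w = g w'"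
      using bij by (metis bij_betw_imp_surj_on imageE)
    then have "(u, w') \<in> E" using uw automorphism_edge_iff[OF g u] by simp
    then show "w \<in> g ` out_nbrs E u" using w' by (auto simp: out_nbrs_def)
  qed
  show "g ` out_nbrs E u \<subseteq> out_nbrs E (g u)"
    using dg automorphism_edge_iff[OF g u] by (auto simp: out_nbrs_def digraph_def)
qed

text \<open>A single vertex induces a connected subdigraph, so C-homogeneity extends any
  map between two vertices to an automorphism.\<close>

lemma C_homogeneous_vertex_transitive:
  assumes "digraph V E" "C_homogeneous V E" "x \<in> V" "u \<in> V"
  shows "\<exists>g. automorphism V E g \<and> g x = u"
proof -
  have "connected_on E {x}" "connected_on E {u}" by (auto simp: connected_on_def)
  moreover have "induced_iso E (\<lambda>_. u) {x} {u}"
    using assms(1) by (auto simp: induced_iso_def bij_betw_def digraph_def)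
  ultimately show ?thesis
    using assms unfolding C_homogeneous_def
    by (metis empty_subsetI finite.emptyI finite_insert insert_subset singletonI)
qed

definition successor_map :: "'a set \<Rightarrow> ('a \<times> 'a) set \<Rightarrow> ('a \<Rightarrow> 'a) \<Rightarrow> bool" where
  "successor_map V E f \<longleftrightarrow> (\<forall>u\<in>V. out_nbrs E u = {f u})"

lemma C_homogeneous_successor_map:
  assumes dg: "digraph V E" and ch: "C_homogeneous V E"
    and x: "x \<in> V" and y: "out_nbrs E x = {y}"
  shows "\<exists>f. successor_map V E f"
proof -
  have "\<exists>w. out_nbrs E u = {w}" if u: "u \<in> V" for u
  proof -
    obtain g where g: "automorphism V E g" "g x = u"
      using C_homogeneous_vertex_transitive[OF dg ch x u] by blast
    then have "out_nbrs E u = {g y}" using automorphism_out_nbrs[OF dg g(1) x] y by simp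
    then show ?thesis ..
  qed
  then show ?thesis unfolding successor_map_def by metis
qed

text \<open>Periodicity of a point \<open>u\<close> under \<open>f\<close> is expressed as \<open>u \<in> orbit f u\<close>.\<close>

lemma finite_invariant_set_has_periodic:
  assumes "finite C" "f ` C \<subseteq> C" "x \<in> C"
  shows "\<exists>u\<in>C. u \<in> orbit f u"
proof -
  have "(f ^^ k) x \<in> C" for k
    using assms(2,3) by (induction k) auto
  then have "range (\<lambda>k. (f ^^ k) x) \<subseteq> C" by blast
  then have "\<not> inj (\<lambda>k. (f ^^ k) x)"
    using assms(1) finite_subset infinite_UNIV_nat finite_imageD by blast
  then obtain i j where ij: "i < j" "(f ^^ i) x = (f ^^ j) x"
    unfolding inj_def by (metis linorder_neqE_nat)
  have "(f ^^ (j - i)) ((f ^^ i) x) = (f ^^ (j - i + i)) x" by (simp only: funpow_add o_apply)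
  also have "\<dots> = (f ^^ i) x" using ij by simp
  finally have "(f ^^ (j - i)) ((f ^^ i) x) = (f ^^ i) x" .
  with ij(1) have "(f ^^ i) x \<in> orbit f ((f ^^ i) x)"
    by (auto simp: orbit_altdef intro!: exI[of _ "j - i"])
  then show ?thesis using \<open>range _ \<subseteq> C\<close> by blast
qed

context
  fixes V E f
  assumes dg: "digraph V E" and succ: "successor_map V E f"
begin

lemma successor_map_edge_iff: "(u, w) \<in> E \<longleftrightarrow> u \<in> V \<and> w = f u"
  using dg succ by (auto simp: successor_map_def out_nbrs_def digraph_def)

lemma successor_map_funpow_in: "u \<in> V \<Longrightarrow> (f ^^ k) u \<in> V"
  using dg successor_map_edge_iff by (induction k) (auto simp: digraph_def)

lemma orbit_subset_vertices: "u \<in> V \<Longrightarrow> orbit f u \<subseteq> V"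
  using successor_map_funpow_in by (auto simp: orbit_altdef)

lemma automorphism_commute:
  assumes g: "automorphism V E g" and u: "u \<in> V"
  shows "g (f u) = f (g u)"
proof -
  have "g u \<in> V" using g u by (auto simp: automorphism_def induced_iso_def bij_betw_def)
  then have "{f (g u)} = g ` {f u}"
    using automorphism_out_nbrs[OF dg g u] succ u by (simp add: successor_map_def)
  then show ?thesis by simp
qed

lemma automorphism_commute_funpow:
  assumes g: "automorphism V E g" and u: "u \<in> V"
  shows "g ((f ^^ k) u) = (f ^^ k) (g u)"
proof (induction k)
  case (Suc k)
  then show ?case
    using automorphism_commute[OF g successor_map_funpow_in[OF u, of k]] by simp
qed simp

lemma automorphism_preserves_periodic:
  assumes "automorphism V E g" "u \<in> V" "u \<in> orbit f u"
  shows "g u \<in> orbit f (g u)"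
proof -
  obtain n where "0 < n" "(f ^^ n) u = u" using assms(3) by (auto simp: orbit_altdef)
  then show ?thesis
    using automorphism_commute_funpow[OF assms(1,2), of n] by (auto simp: orbit_altdef)
qed

lemma C_homogeneous_periodic_transfer:
  assumes ch: "C_homogeneous V E" and "u \<in> V" "w \<in> V" "u \<in> orbit f u"
  shows "w \<in> orbit f w"
proof -
  obtain g where "automorphism V E g" "g u = w"
    using C_homogeneous_vertex_transitive[OF dg ch \<open>u \<in> V\<close> \<open>w \<in> V\<close>] by blast
  then show ?thesis using automorphism_preserves_periodic assms by blast
qed

text \<open>The orbit of \<open>x\<close> is closed under undirected adjacency: a back edge \<open>(b, a)\<close>
  means \<open>a = f b\<close>, and since \<open>b\<close> is periodic it lies on the orbit of \<open>f b\<close>.\<close>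

lemma connected_periodic_single_orbit:
  assumes conn: "connected_on E V" and per: "\<forall>u\<in>V. u \<in> orbit f u" and x: "x \<in> V"
  shows "V = orbit f x"
proof
  let ?R = "{(u, w). u \<in> V \<and> w \<in> V \<and> adj E u w}"
  have "w \<in> orbit f x" if "(x, w) \<in> ?R\<^sup>*" for w
    using that
  proof (induction rule: rtrancl_induct)
    case base
    show ?case using per x by blast
  next
    case (step a b)
    then have "b \<in> V" and "(a, b) \<in> E \<or> (b, a) \<in> E" by (auto simp: adj_def)
    then consider "b = f a" | "a = f b" "b \<in> orbit f b"
      using per unfolding successor_map_edge_iff by auto
    then show ?case
    proof cases
      case 1
      then show ?thesis using step.IH by (simp add: orbit.step)
    next
      case 2
      then have "b \<in> orbit f a" using self_in_orbit_step by metis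
      then show ?thesis using step.IH by (rule orbit_trans)
    qed
  qed
  then show "V \<subseteq> orbit f x" using conn x by (auto simp: connected_on_def)
  show "orbit f x \<subseteq> V" using orbit_subset_vertices[OF x] .
qed

lemma single_orbit_directed_cycle:
  assumes x: "x \<in> orbit f x" and V: "V = orbit f x"
  shows "is_directed_cycle V E"
proof -
  define n where "n = funpow_dist1 f x x"
  define v where "v = (\<lambda>i. (f ^^ i) x)"
  have period: "(f ^^ n) x = x" using funpow_dist1_prop[OF x] by (simp add: n_def)
  have inj: "inj_on v {..<n}"
    using inj_on_funpow_dist1[OF x] by (simp add: n_def v_def lessThan_atLeast0)
  have Veq: "V = v ` {..<n}"
    using orbit_conv_funpow_dist1[OF x] V by (simp add: n_def v_def lessThan_atLeast0)
  have step: "f (v i) = v (Suc i mod n)" for i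
    using funpow_mod_eq[OF period, of "Suc i"] by (simp add: v_def)
  have "x \<in> V" using V x by simp
  have edge: "(u, f u) \<in> E" if "u \<in> V" for u
    using successor_map_edge_iff that by simp
  have "n \<noteq> 1"
  proof
    assume "n = 1"
    then have "f x = x" using period by simp
    then show False using edge[OF \<open>x \<in> V\<close>] dg by (auto simp: digraph_def)
  qed
  moreover have "n \<noteq> 2"
  proof
    assume "n = 2"
    then have "f (f x) = x" using period by (simp add: numeral_2_eq_2)
    moreover have "(x, f x) \<in> E" "(f x, f (f x)) \<in> E"
      using edge successor_map_funpow_in[OF \<open>x \<in> V\<close>, of 1] \<open>x \<in> V\<close> by auto
    ultimately show False using dg unfolding digraph_def by metis
  qed
  ultimately have "n \<ge> 3" by (simp add: n_def)
  moreover have "E = {(v i, v (Suc i mod n)) | i. i < n}"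
  proof -
    have "E = (\<lambda>u. (u, f u)) ` V" using successor_map_edge_iff by auto
    then show ?thesis using Veq step by auto
  qed
  ultimately show ?thesis unfolding is_directed_cycle_def using inj Veq by blast
qed

lemma aperiodic_no_undirected_cycle:
  assumes aper: "\<forall>u\<in>V. u \<notin> orbit f u"
  shows "\<not> has_undirected_cycle V E"
proof
  assume "has_undirected_cycle V E"
  then obtain n v where n: "n \<ge> 3" and inj: "inj_on v {..<n}" and vV: "v ` {..<n} \<subseteq> V"
    and ad: "\<forall>i<n. adj E (v i) (v (Suc i mod n))"
    unfolding has_undirected_cycle_def by blast
  let ?C = "v ` {..<n}"
  have orient: "f (v i) = v (Suc i mod n) \<or> f (v (Suc i mod n)) = v i" if "i < n" for i
    using ad that unfolding adj_def successor_map_edge_iff by auto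
  txt \<open>No vertex of the cycle has both of its cycle edges outgoing.\<close>
  have no_fork: "f (v (Suc i mod n)) \<noteq> v (Suc (Suc i mod n) mod n)"
    if i: "i < n" "f (v (Suc i mod n)) = v i" for i
  proof
    assume "f (v (Suc i mod n)) = v (Suc (Suc i mod n) mod n)"
    with i have "v (Suc (Suc i mod n) mod n) = v i" by simp
    then have "Suc (Suc i mod n) mod n = i" by (rule inj_onD[OF inj]) (use i in auto)
    then show False using i n by (auto simp: mod_Suc split: if_splits)
  qed
  have "f ` ?C \<subseteq> ?C"
  proof (cases "\<forall>i<n. f (v i) = v (Suc i mod n)")
    case True
    then show ?thesis using n by auto
  next
    case False
    then obtain i0 where i0: "i0 < n" "f (v (Suc i0 mod n)) = v i0" using orient by blast
    have backward: "f (v (Suc ((i0 + k) mod n) mod n)) = v ((i0 + k) mod n)" for k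
    proof (induction k)
      case 0
      show ?case using i0 by simp
    next
      case (Suc k)
      let ?i = "(i0 + k) mod n"
      have "?i < n" using n by simp
      then have "f (v (Suc ?i mod n)) \<noteq> v (Suc (Suc ?i mod n) mod n)" using no_fork Suc.IH by blast
      then have "f (v (Suc (Suc ?i mod n) mod n)) = v (Suc ?i mod n)"
        using orient[of "Suc ?i mod n"] n by auto
      then show ?case by (simp add: mod_Suc_eq)
    qed
    have "f (v j) \<in> ?C" if j: "j < n" for j
    proof -
      have "Suc ((i0 + (j + n - Suc i0)) mod n) mod n = j"
        using i0(1) j by (simp add: mod_Suc_eq)
      then have "f (v j) = v ((i0 + (j + n - Suc i0)) mod n)" using backward by metis
      then show ?thesis using n by simp
    qed
    then show ?thesis by blast
  qed
  then obtain u where "u \<in> ?C" "u \<in> orbit f u"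
    using finite_invariant_set_has_periodic[of ?C f "v 0"] n by auto
  then show False using aper vV by blast
qed

end

lemma out_degree_one_tree_or_cycle:
  assumes dg: "digraph V E" and conn: "connected_on E V" and ch: "C_homogeneous V E"
    and x: "x \<in> V" and y: "out_nbrs E x = {y}"
  shows "(is_tree V E \<and> infinite V) \<or> is_directed_cycle V E"
proof -
  obtain f where succ: "successor_map V E f" using C_homogeneous_successor_map[OF dg ch x y] ..
  show ?thesis
  proof (cases "x \<in> orbit f x")
    case True
    then have "\<forall>u\<in>V. u \<in> orbit f u"
      using C_homogeneous_periodic_transfer[OF dg succ ch x] by simp
    then have "V = orbit f x" by (rule connected_periodic_single_orbit[OF dg succ conn _ x])
    then show ?thesis using single_orbit_directed_cycle[OF dg succ True] by simp
  next
    case False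
    then have aper: "\<forall>u\<in>V. u \<notin> orbit f u"
      using C_homogeneous_periodic_transfer[OF dg succ ch _ x] by auto
    have "f ` V \<subseteq> V" using successor_map_funpow_in[OF dg succ, of _ 1] by auto
    then have "infinite V" using finite_invariant_set_has_periodic[of V f x] x aper by auto
    moreover have "\<not> has_undirected_cycle V E"
      using aperiodic_no_undirected_cycle[OF dg succ aper] .
    ultimately show ?thesis using conn by (simp add: is_tree_def)
  qed
qed

lemma adj_converse [simp]: "adj (E\<inverse>) = adj E"
  by (auto simp: adj_def fun_eq_iff)

lemma connected_on_converse [simp]: "connected_on (E\<inverse>) = connected_on E"
  by (simp add: fun_eq_iff connected_on_def)

lemma digraph_converse [simp]: "digraph V (E\<inverse>) \<longleftrightarrow> digraph V E"
  by (auto simp: digraph_def)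

lemma induced_iso_converse [simp]: "induced_iso (E\<inverse>) = induced_iso E"
  by (auto simp: fun_eq_iff induced_iso_def)

lemma automorphism_converse [simp]: "automorphism V (E\<inverse>) = automorphism V E"
  by (simp add: fun_eq_iff automorphism_def)

lemma C_homogeneous_converse [simp]: "C_homogeneous V (E\<inverse>) \<longleftrightarrow> C_homogeneous V E"
  by (simp add: C_homogeneous_def)

lemma has_undirected_cycle_converse [simp]:
  "has_undirected_cycle V (E\<inverse>) \<longleftrightarrow> has_undirected_cycle V E"
  by (simp add: has_undirected_cycle_def)

lemma is_tree_converse [simp]: "is_tree V (E\<inverse>) \<longleftrightarrow> is_tree V E"
  by (simp add: is_tree_def)

lemma out_nbrs_converse [simp]: "out_nbrs (E\<inverse>) = in_nbrs E"
  by (auto simp: fun_eq_iff out_nbrs_def in_nbrs_def)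

text \<open>Reversing a directed cycle amounts to reindexing it along \<open>i \<mapsto> (n - i) mod n\<close>.\<close>

lemma directed_cycle_converse:
  assumes "is_directed_cycle V (E\<inverse>)"
  shows "is_directed_cycle V E"
proof -
  obtain n v where n: "n \<ge> 3" and inj: "inj_on v {..<n}" and V: "V = v ` {..<n}"
    and E: "E\<inverse> = {(v i, v (Suc i mod n)) | i. i < n}"
    using assms unfolding is_directed_cycle_def by blast
  define r where "r i = (n - i) mod n" for i
  have r_bij: "bij_betw r {..<n} {..<n}"
    by (rule bij_betw_byWitness[where f' = r]) (use n in \<open>auto simp: r_def mod_if\<close>)
  have r_step: "r i = Suc (n - 1 - i) mod n" "r (Suc i mod n) = n - 1 - i" if "i < n" for i
    using that unfolding r_def by (cases "i = 0"; auto simp: mod_Suc)+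
  have "E = (E\<inverse>)\<inverse>" by simp
  also have "\<dots> = {(v (Suc j mod n), v j) | j. j < n}" unfolding E by auto
  also have "\<dots> = {((v \<circ> r) i, (v \<circ> r) (Suc i mod n)) | i. i < n}"
  proof (intro set_eqI iffI)
    fix p assume "p \<in> {(v (Suc j mod n), v j) | j. j < n}"
    then obtain j where j: "j < n" "p = (v (Suc j mod n), v j)" by blast
    then have "n - 1 - j < n" "r (n - 1 - j) = Suc j mod n" "r (Suc (n - 1 - j) mod n) = j"
      using r_step[of "n - 1 - j"] by auto
    then show "p \<in> {((v \<circ> r) i, (v \<circ> r) (Suc i mod n)) | i. i < n}"
      using j(2) by (metis (mono_tags, lifting) comp_apply mem_Collect_eq)
  next
    fix p assume "p \<in> {((v \<circ> r) i, (v \<circ> r) (Suc i mod n)) | i. i < n}"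
    then obtain i where i: "i < n" "p = ((v \<circ> r) i, (v \<circ> r) (Suc i mod n))" by blast
    then have "n - 1 - i < n" "p = (v (Suc (n - 1 - i) mod n), v (n - 1 - i))"
      using r_step[OF i(1)] by auto
    then show "p \<in> {(v (Suc j mod n), v j) | j. j < n}" by blast
  qed
  finally have "E = {((v \<circ> r) i, (v \<circ> r) (Suc i mod n)) | i. i < n}" .
  moreover have "inj_on (v \<circ> r) {..<n}"
    using r_bij inj by (simp add: bij_betw_def comp_inj_on)
  moreover have "V = (v \<circ> r) ` {..<n}"
    using r_bij V by (metis bij_betw_imp_surj_on image_comp)
  ultimately show ?thesis unfolding is_directed_cycle_def using n by blast
qed

theorem lemma4p1:
  fixes V :: "'a set" and E :: "('a \<times> 'a) set" and x :: 'a
  assumes "digraph V E"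
    and "locally_finite V E"
    and "connected_on E V"
    and "C_homogeneous V E"
    and "x \<in> V"
    and "(\<exists>y. out_nbrs E x = {y}) \<or> (\<exists>y. in_nbrs E x = {y})"
  shows "(is_tree V E \<and> infinite V) \<or> is_directed_cycle V E"
proof -
  consider y where "out_nbrs E x = {y}" | y where "out_nbrs (E\<inverse>) x = {y}"
    using assms(6) by auto
  then show ?thesis
  proof cases
    case 1
    then show ?thesis by (rule out_degree_one_tree_or_cycle[OF assms(1,3,4,5)])
  next
    case 2
    have "digraph V (E\<inverse>)" "connected_on (E\<inverse>) V" "C_homogeneous V (E\<inverse>)"
      using assms by simp_all
    from out_degree_one_tree_or_cycle[OF this assms(5) 2]
    have "(is_tree V E \<and> infinite V) \<or> is_directed_cycle V (E\<inverse>)" by simp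
    then show ?thesis using directed_cycle_converse[of V E] by blast
  qed
qed

end
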